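(* Let $k$ be a field of characteristic $2$, $g = x^2+y^2z+yz^2+xyz$, $m\ge 0$, $R_m = k[x_0,\dots,x_m,y_0,\dots,y_m,z_0,\dots,z_m]$. For positive integers $p,q,r\le m+1$ set $\mathbf{x}_p=\sum_{i=p}^m x_it^i$, $\mathbf{y}_q=\sum_{i=q}^m y_it^i$, $\mathbf{z}_r=\sum_{i=r}^m z_it^i$, and define $G_{pqr}^{(l)}\in R_m$ ($0\le l\le m$) by $g(\mathbf{x}_p,\mathbf{y}_q,\mathbf{z}_r)=\sum_{l=0}^m G_{pqr}^{(l)}t^l$ in $R_m[t]/\langle t^{m+1}\rangle$. Then for $0\le l\le m$, $$G_{pqr}^{(l)} = \sum_{u\ge p,\,2u=l} x_u^2 + \sum_{v\ge q,\,w\ge r,\,2v+w=l} y_v^2z_w + \sum_{v\ge q,\,w\ge r,\,v+2w=l} y_vz_w^2 + \sum_{u\ge p,\,v\ge q,\,w\ge r,\,u+v+w=l} x_uy_vz_w$$ (empty sums being $0$). Furthermore: (1) If $l<2p$, $l<2q+r$ and $l<q+2r$, then $G_{pqr}^{(l)}=0$. (2) If $l=2p$, $l<2q+r$ and $l<q+2r$, then $G_{pqr}^{(l)}=x_p^2$. (3) If $p>q=r$ and $l=2p=3q$, then $G_{pqq}^{(l)}=x_p^2+y_q^2z_q+y_qz_q^2$. (4) If $p\ge q>r$ and $l\ge 2p=q+2r$, then $T_y(G_{pqr}^{(l)})=y_{l-2r}z_r^2$. (5) If $p\ge r>q$ and $l\ge 2p=2q+r$, then $T_z(G_{pqr}^{(l)})=y_q^2z_{l-2q}$.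 (6) If $p>q=r$ and $l>3q$, then $T_y(G_{pqq}^{(l)})=y_{l-2q}z_q^2$. (7) If $p>q=r$ and $l>3q$, then $T_z(G_{pqq}^{(l)})=y_q^2z_{l-2q}$.
   Context: For $h\in R_m$, let $i_0$ be the largest index $i$ such that $y_i$ occurs in $h$; $T_y(h)$ denotes the sum of the terms (monomials with their coefficients) of $h$ containing $y_{i_0}$. $T_z(h)$ is defined analogously with the variables $z_i$. *)

theory Defs
  imports "HOL-Library.Poly_Mapping" "HOL-Computational_Algebra.Polynomial"
begin

text \<open>Variables of R_m: x_i, y_i, z_i (only indices i \<le> m are ever used).\<close>
datatype var = X nat | Y nat | Z nat

type_synonym 'a mpoly = "(var \<Rightarrow>\<^sub>0 nat) \<Rightarrow>\<^sub>0 'a"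

definition Var :: "var \<Rightarrow> 'a::comm_semiring_1 mpoly" where
  "Var v = Poly_Mapping.single (Poly_Mapping.single v 1) 1"

definition gpoly :: "'b::comm_semiring_1 \<Rightarrow> 'b \<Rightarrow> 'b \<Rightarrow> 'b" where
  "gpoly a b c = a^2 + b^2 * c + b * c^2 + a * b * c"

definition arc :: "(nat \<Rightarrow> var) \<Rightarrow> nat \<Rightarrow> nat \<Rightarrow> 'a::comm_semiring_1 mpoly poly" where
  "arc V p m = (\<Sum>i\<in>{p..m}. monom (Var (V i)) i)"

text \<open>G_{pqr}^{(l)}: coefficient of t^l of g(x_p,y_q,z_r); for l \<le> m this is the
  coefficient of t^l in R_m[t]/(t^{m+1}).\<close>
definition Gc :: "nat \<Rightarrow> nat \<Rightarrow> nat \<Rightarrow> nat \<Rightarrow> nat \<Rightarrow> 'a::comm_semiring_1 mpoly" where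
  "Gc m p q r l = coeff (gpoly (arc X p m) (arc Y q m) (arc Z r m)) l"

definition Ty :: "'a::comm_semiring_1 mpoly \<Rightarrow> 'a mpoly" where
  "Ty h = (let i0 = Max {i. \<exists>mon\<in>Poly_Mapping.keys h. Y i \<in> Poly_Mapping.keys mon}
           in \<Sum>mon\<in>{mon\<in>Poly_Mapping.keys h. Y i0 \<in> Poly_Mapping.keys mon}. Poly_Mapping.single mon (Poly_Mapping.lookup h mon))"

definition Tz :: "'a::comm_semiring_1 mpoly \<Rightarrow> 'a mpoly" where
  "Tz h = (let i0 = Max {i. \<exists>mon\<in>Poly_Mapping.keys h. Z i \<in> Poly_Mapping.keys mon}
           in \<Sum>mon\<in>{mon\<in>Poly_Mapping.keys h. Z i0 \<in> Poly_Mapping.keys mon}. Poly_Mapping.single mon (Poly_Mapping.lookup h mon))"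

end

theory Submission
  imports Defs
begin

(* In characteristic 2 squaring is additive, so the square of the arc x_p is the sum of the
   x_i^2 t^(2i); expanding g(x_p, y_q, z_r) then yields the coefficient formula directly.
   The monomials x_u^2, y_v^2 z_w, y_v z_w^2 and x_u y_v z_w occurring in it are pairwise
   distinct, so G^(l) is a sum of distinct monomials with coefficient 1 and nothing cancels.
   Parts (1)-(3) say that the four index sets are empty or singletons. For (4)-(7) one checks
   that the largest y-index (z-index) occurring is l - 2r (l - 2q), attained by a single
   monomial, which is then all of T_y (T_z). *)

lemma CHAR_poly_mapping [simp]:
  "CHAR('b::monoid_add \<Rightarrow>\<^sub>0 'a::semiring_1) = CHAR('a)"
proof (rule CHAR_eqI)
  show "of_nat CHAR('a) = (0 :: 'b \<Rightarrow>\<^sub>0 'a)"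
    by (metis single_of_nat of_nat_CHAR single_zero)
next
  fix n assume "of_nat n = (0 :: 'b \<Rightarrow>\<^sub>0 'a)"
  then have "of_nat n = (0 :: 'a)"
    by (metis single_of_nat lookup_single_eq lookup_zero)
  then show "CHAR('a) dvd n"
    by (simp add: of_nat_eq_0_iff_char_dvd)
qed

lemma power2_sum_CHAR_2:
  fixes f :: "'i \<Rightarrow> 'b::comm_semiring_1"
  assumes "CHAR('b) = 2"
  shows "(\<Sum>i\<in>A. f i)^2 = (\<Sum>i\<in>A. f i ^ 2)"
proof -
  have "(2::'b) = 0"
    using of_nat_CHAR[where 'a='b] assms by simp
  then have "(a + b)^2 = a^2 + b^2" for a b :: 'b
    by (simp add: power2_sum)
  then show ?thesis
    by (induction A rule: infinite_finite_induct) simp_all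
qed

lemma coeff_sum_monom:
  assumes "finite A"
  shows "coeff (\<Sum>i\<in>A. monom (f i) (e i)) l = (\<Sum>i\<in>{i\<in>A. e i = l}. f i)"
  using assms by (simp add: coeff_sum coeff_monom sum.inter_filter)

lemma sum_monom_mult_sum_monom:
  "(\<Sum>i\<in>A. monom (f i) (e i)) * (\<Sum>j\<in>B. monom (g j) (d j)) =
   (\<Sum>(i,j)\<in>A\<times>B. monom (f i * g j) (e i + d j))"
  by (simp add: sum_product mult_monom sum.cartesian_product)

lemma arc_power2:
  assumes "CHAR('a::comm_semiring_1) = 2"
  shows "(arc V p m :: 'a mpoly poly)^2 = (\<Sum>i\<in>{p..m}. monom (Var (V i)^2) (2*i))"
  unfolding arc_def using assms by (simp add: power2_sum_CHAR_2 monom_power mult.commute)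

lemma Gc_eq_sums:
  assumes "CHAR('a::comm_semiring_1) = 2" and "l \<le> m"
  shows "(Gc m p q r l :: 'a mpoly) =
           (\<Sum>u\<in>{u. p \<le> u \<and> 2*u = l}. Var (X u)^2)
         + (\<Sum>(v,w)\<in>{(v,w). q \<le> v \<and> r \<le> w \<and> 2*v + w = l}. Var (Y v)^2 * Var (Z w))
         + (\<Sum>(v,w)\<in>{(v,w). q \<le> v \<and> r \<le> w \<and> v + 2*w = l}. Var (Y v) * Var (Z w)^2)
         + (\<Sum>(u,v,w)\<in>{(u,v,w). p \<le> u \<and> q \<le> v \<and> r \<le> w \<and> u + v + w = l}.
               Var (X u) * Var (Y v) * Var (Z w))"
proof -
  let ?x = "arc X p m :: 'a mpoly poly" and ?y = "arc Y q m :: 'a mpoly poly"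
    and ?z = "arc Z r m :: 'a mpoly poly"
  note square = arc_power2[OF assms(1)]
  have "coeff (?x^2) l = (\<Sum>u\<in>{u. p \<le> u \<and> 2*u = l}. Var (X u)^2)"
    unfolding square using assms(2) by (subst coeff_sum_monom) (auto intro!: sum.cong)
  moreover have "coeff (?y^2 * ?z) l =
      (\<Sum>(v,w)\<in>{(v,w). q \<le> v \<and> r \<le> w \<and> 2*v + w = l}. Var (Y v)^2 * Var (Z w))"
    unfolding square unfolding arc_def sum_monom_mult_sum_monom split_def
    using assms(2) by (subst coeff_sum_monom) (auto intro!: sum.cong)
  moreover have "coeff (?y * ?z^2) l =
      (\<Sum>(v,w)\<in>{(v,w). q \<le> v \<and> r \<le> w \<and> v + 2*w = l}. Var (Y v) * Var (Z w)^2)"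
    unfolding square unfolding arc_def sum_monom_mult_sum_monom split_def
    using assms(2) by (subst coeff_sum_monom) (auto intro!: sum.cong)
  moreover have "coeff (?x * ?y * ?z) l =
      (\<Sum>(u,v,w)\<in>{(u,v,w). p \<le> u \<and> q \<le> v \<and> r \<le> w \<and> u + v + w = l}.
          Var (X u) * Var (Y v) * Var (Z w))"
  proof -
    let ?flat = "\<lambda>((u,v),w). (u,v,w)"
    have "coeff (?x * ?y * ?z) l =
        (\<Sum>((u,v),w)\<in>{((u,v),w). p \<le> u \<and> q \<le> v \<and> r \<le> w \<and> u + v + w = l}.
          Var (X u) * Var (Y v) * Var (Z w))"
      unfolding arc_def sum_monom_mult_sum_monom split_def
      using assms(2) by (subst coeff_sum_monom) (auto intro!: sum.cong)
    also have "\<dots> = (\<Sum>(u,v,w)\<in>?flat ` {((u,v),w). p \<le> u \<and> q \<le> v \<and> r \<le> w \<and> u + v + w = l}.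
          Var (X u) * Var (Y v) * Var (Z w))"
      by (subst sum.reindex) (auto simp: inj_on_def split_def)
    also have "?flat ` {((u,v),w). p \<le> u \<and> q \<le> v \<and> r \<le> w \<and> u + v + w = l} =
        {(u,v,w). p \<le> u \<and> q \<le> v \<and> r \<le> w \<and> u + v + w = l}"
      by (force simp: image_iff)
    finally show ?thesis .
  qed
  ultimately show ?thesis
    unfolding Gc_def gpoly_def by simp
qed

definition x_sq :: "nat \<Rightarrow> var \<Rightarrow>\<^sub>0 nat" where
  "x_sq u = Poly_Mapping.single (X u) 2"

definition y_sq_z :: "nat \<times> nat \<Rightarrow> var \<Rightarrow>\<^sub>0 nat" where
  "y_sq_z = (\<lambda>(v,w). Poly_Mapping.single (Y v) 2 + Poly_Mapping.single (Z w) 1)"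

definition y_z_sq :: "nat \<times> nat \<Rightarrow> var \<Rightarrow>\<^sub>0 nat" where
  "y_z_sq = (\<lambda>(v,w). Poly_Mapping.single (Y v) 1 + Poly_Mapping.single (Z w) 2)"

definition x_y_z :: "nat \<times> nat \<times> nat \<Rightarrow> var \<Rightarrow>\<^sub>0 nat" where
  "x_y_z = (\<lambda>(u,v,w).
     Poly_Mapping.single (X u) 1 + Poly_Mapping.single (Y v) 1 + Poly_Mapping.single (Z w) 1)"

lemma lookup_monomials [simp]:
  "Poly_Mapping.lookup (x_sq u) k = (if k = X u then 2 else 0)"
  "Poly_Mapping.lookup (y_sq_z (v,w)) k = (if k = Y v then 2 else 0) + (if k = Z w then 1 else 0)"
  "Poly_Mapping.lookup (y_z_sq (v,w)) k = (if k = Y v then 1 else 0) + (if k = Z w then 2 else 0)"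
  "Poly_Mapping.lookup (x_y_z (u,v,w)) k =
     (if k = X u then 1 else 0) + (if k = Y v then 1 else 0) + (if k = Z w then 1 else 0)"
  by (simp_all add: x_sq_def y_sq_z_def y_z_sq_def x_y_z_def lookup_add lookup_single when_def)

lemma Var_products_eq_single:
  "Var (X u)^2 = (Poly_Mapping.single (x_sq u) 1 :: 'a::comm_semiring_1 mpoly)"
  "Var (Y v)^2 * Var (Z w) = (Poly_Mapping.single (y_sq_z (v,w)) 1 :: 'a mpoly)"
  "Var (Y v) * Var (Z w)^2 = (Poly_Mapping.single (y_z_sq (v,w)) 1 :: 'a mpoly)"
  "Var (X u) * Var (Y v) * Var (Z w) = (Poly_Mapping.single (x_y_z (u,v,w)) 1 :: 'a mpoly)"
  by (simp_all add: Var_def x_sq_def y_sq_z_def y_z_sq_def x_y_z_def power2_eq_square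
      mult_single numeral_2_eq_2 flip: single_add)

lemma inj_monomials: "inj x_sq" "inj y_sq_z" "inj y_z_sq" "inj x_y_z"
  unfolding inj_def poly_mapping_eq_iff fun_eq_iff by auto

lemmas monomials_eq_iff [simp] = inj_monomials[THEN inj_eq]

(* Each family is recognised by the variable carrying exponent 2 (none for x_y_z). *)
lemma monomial_families_distinct:
  "x_sq u \<noteq> y_sq_z s" "x_sq u \<noteq> y_z_sq s" "x_sq u \<noteq> x_y_z t"
  "y_sq_z s \<noteq> y_z_sq s'" "y_sq_z s \<noteq> x_y_z t" "y_z_sq s \<noteq> x_y_z t"
proof -
  show "x_sq u \<noteq> y_sq_z s" "x_sq u \<noteq> y_z_sq s" "x_sq u \<noteq> x_y_z t"
    by (cases s, cases t,
        auto dest!: arg_cong[of _ _ "\<lambda>mon. Poly_Mapping.lookup mon (X u)"] split: if_splits)+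
  show "y_sq_z s \<noteq> y_z_sq s'" "y_sq_z s \<noteq> x_y_z t"
    by (cases s, cases s', cases t,
        auto dest!: arg_cong[of _ _ "\<lambda>mon. Poly_Mapping.lookup mon (Y (fst s))"] split: if_splits)+
  show "y_z_sq s \<noteq> x_y_z t"
    by (cases s, cases t,
        auto dest!: arg_cong[of _ _ "\<lambda>mon. Poly_Mapping.lookup mon (Z (snd s))"] split: if_splits)
qed

definition G_monomials :: "nat \<Rightarrow> nat \<Rightarrow> nat \<Rightarrow> nat \<Rightarrow> (var \<Rightarrow>\<^sub>0 nat) set" where
  "G_monomials p q r l =
     x_sq ` {u. p \<le> u \<and> 2*u = l}
     \<union> y_sq_z ` {(v,w). q \<le> v \<and> r \<le> w \<and> 2*v + w = l}
     \<union> y_z_sq ` {(v,w). q \<le> v \<and> r \<le> w \<and> v + 2*w = l}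
     \<union> x_y_z ` {(u,v,w). p \<le> u \<and> q \<le> v \<and> r \<le> w \<and> u + v + w = l}"

lemma finite_G_monomials: "finite (G_monomials p q r l)"
proof -
  have "finite {u. p \<le> u \<and> 2*u = l}"
    by (rule finite_subset[of _ "{..l}"]) auto
  moreover have "finite {(v,w). q \<le> v \<and> r \<le> w \<and> 2*v + w = l}"
    by (rule finite_subset[of _ "{..l} \<times> {..l}"]) auto
  moreover have "finite {(v,w). q \<le> v \<and> r \<le> w \<and> v + 2*w = l}"
    by (rule finite_subset[of _ "{..l} \<times> {..l}"]) auto
  moreover have "finite {(u,v,w). p \<le> u \<and> q \<le> v \<and> r \<le> w \<and> u + v + w = l}"
    by (rule finite_subset[of _ "{..l} \<times> {..l} \<times> {..l}"]) auto
  ultimately show ?thesis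
    unfolding G_monomials_def by (intro finite_UnI finite_imageI)
qed

lemma Gc_eq_sum_G_monomials:
  assumes "CHAR('a::comm_semiring_1) = 2" and "l \<le> m"
  shows "(Gc m p q r l :: 'a mpoly) = (\<Sum>mon\<in>G_monomials p q r l. Poly_Mapping.single mon 1)"
proof -
  have disjoint:
    "x_sq ` S1 \<inter> y_sq_z ` S2 = {}"
    "(x_sq ` S1 \<union> y_sq_z ` S2) \<inter> y_z_sq ` S3 = {}"
    "(x_sq ` S1 \<union> y_sq_z ` S2 \<union> y_z_sq ` S3) \<inter> x_y_z ` S4 = {}" for S1 S2 S3 S4
    using monomial_families_distinct by blast+
  have inj: "inj_on x_sq S1" "inj_on y_sq_z S2" "inj_on y_z_sq S3" "inj_on x_y_z S4"
    for S1 S2 S3 S4 using inj_monomials by (auto intro: inj_on_subset)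
  show ?thesis
    using finite_G_monomials[of p q r l]
    unfolding Gc_eq_sums[OF assms] G_monomials_def
    by (simp add: sum.union_disjoint disjoint sum.reindex inj split_def Var_products_eq_single)
qed

lemma Gc_eq_0:
  assumes "CHAR('a::comm_semiring_1) = 2" and "l \<le> m"
    and "l < 2*p" "l < 2*q + r" "l < q + 2*r"
  shows "(Gc m p q r l :: 'a mpoly) = 0"
proof -
  have "G_monomials p q r l = {}"
    using assms(3-5) by (auto simp: G_monomials_def)
  then show ?thesis
    by (simp add: Gc_eq_sum_G_monomials[OF assms(1,2)])
qed

lemma Gc_eq_Var_X_sq:
  assumes "CHAR('a::comm_semiring_1) = 2" and "l \<le> m"
    and "l = 2*p" "l < 2*q + r" "l < q + 2*r"
  shows "(Gc m p q r l :: 'a mpoly) = Var (X p)^2"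
proof -
  have "G_monomials p q r l = {x_sq p}"
    using assms(3-5) by (auto simp: G_monomials_def)
  then show ?thesis
    by (simp add: Gc_eq_sum_G_monomials[OF assms(1,2)] Var_products_eq_single)
qed

lemma Gc_eq_at_2p_eq_3q:
  assumes "CHAR('a::comm_semiring_1) = 2" and "l \<le> m"
    and "q < p" "l = 2*p" "2*p = 3*q"
  shows "(Gc m p q q l :: 'a mpoly) = Var (X p)^2 + Var (Y q)^2 * Var (Z q) + Var (Y q) * Var (Z q)^2"
proof -
  have index_sets:
    "{u. p \<le> u \<and> 2*u = l} = {p}"
    "{(v,w). q \<le> v \<and> q \<le> w \<and> 2*v + w = l} = {(q,q)}"
    "{(v,w). q \<le> v \<and> q \<le> w \<and> v + 2*w = l} = {(q,q)}"
    "{(u,v,w). p \<le> u \<and> q \<le> v \<and> q \<le> w \<and> u + v + w = l} = {}"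
    using assms(3-5) by auto
  show ?thesis
    unfolding Gc_eq_sums[OF assms(1,2)] index_sets by simp
qed

definition top_index_part :: "(nat \<Rightarrow> var) \<Rightarrow> 'a::comm_semiring_1 mpoly \<Rightarrow> 'a mpoly" where
  "top_index_part V h =
     (let i0 = Max {i. \<exists>mon\<in>Poly_Mapping.keys h. V i \<in> Poly_Mapping.keys mon}
      in \<Sum>mon\<in>{mon\<in>Poly_Mapping.keys h. V i0 \<in> Poly_Mapping.keys mon}.
           Poly_Mapping.single mon (Poly_Mapping.lookup h mon))"

lemma Ty_eq_top_index_part: "Ty = top_index_part Y"
  and Tz_eq_top_index_part: "Tz = top_index_part Z"
  by (simp_all add: fun_eq_iff Ty_def Tz_def top_index_part_def)

lemma top_index_part_sum_single:
  fixes A :: "(var \<Rightarrow>\<^sub>0 nat) set"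
  assumes "finite A" and "M \<in> A" and "V n \<in> Poly_Mapping.keys M"
    and below: "\<And>mon i. mon \<in> A \<Longrightarrow> V i \<in> Poly_Mapping.keys mon \<Longrightarrow> i \<le> n \<and> (i = n \<longrightarrow> mon = M)"
  shows "top_index_part V (\<Sum>mon\<in>A. Poly_Mapping.single mon 1 :: 'a::comm_semiring_1 mpoly) =
    Poly_Mapping.single M 1"
proof -
  let ?h = "\<Sum>mon\<in>A. Poly_Mapping.single mon 1 :: 'a mpoly"
  have lookup_h: "Poly_Mapping.lookup ?h k = (if k \<in> A then 1 else 0)" for k
    using assms(1) by (simp add: lookup_sum lookup_single when_def)
  then have keys_h: "Poly_Mapping.keys ?h = A"
    by (auto simp: in_keys_iff split: if_splits)
  have "{i. \<exists>mon\<in>A. V i \<in> Poly_Mapping.keys mon} \<subseteq> {..n}"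
    by (auto dest: below)
  moreover have "n \<in> {i. \<exists>mon\<in>A. V i \<in> Poly_Mapping.keys mon}"
    using assms(2,3) by blast
  ultimately have "Max {i. \<exists>mon\<in>A. V i \<in> Poly_Mapping.keys mon} = n"
    by (intro Max_eqI) (auto dest: finite_subset)
  moreover have "{mon\<in>A. V n \<in> Poly_Mapping.keys mon} = {M}"
    using assms(2,3) by (auto dest: below)
  ultimately show ?thesis
    unfolding top_index_part_def keys_h Let_def using lookup_h assms(2) by simp
qed

lemma Ty_Gc:
  assumes "CHAR('a::comm_semiring_1) = 2" and "l \<le> m"
    and "r < p" "3*r < l" "q + 2*r \<le> l"
  shows "Ty (Gc m p q r l :: 'a mpoly) = Var (Y (l - 2*r)) * Var (Z r)^2"
  unfolding Gc_eq_sum_G_monomials[OF assms(1,2)] Ty_eq_top_index_part Var_products_eq_single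
proof (rule top_index_part_sum_single)
  show "y_z_sq (l - 2*r, r) \<in> G_monomials p q r l"
    using assms(5) by (force simp: G_monomials_def)
  show "Y (l - 2*r) \<in> Poly_Mapping.keys (y_z_sq (l - 2*r, r))"
    by (simp add: in_keys_iff)
  fix mon i
  assume "mon \<in> G_monomials p q r l" "Y i \<in> Poly_Mapping.keys mon"
  then show "i \<le> l - 2*r \<and> (i = l - 2*r \<longrightarrow> mon = y_z_sq (l - 2*r, r))"
    using assms(3-5) by (auto simp: G_monomials_def in_keys_iff split: if_splits)
qed (rule finite_G_monomials)

lemma Tz_Gc:
  assumes "CHAR('a::comm_semiring_1) = 2" and "l \<le> m"
    and "q < p" "3*q < l" "2*q + r \<le> l"
  shows "Tz (Gc m p q r l :: 'a mpoly) = Var (Y q)^2 * Var (Z (l - 2*q))"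
  unfolding Gc_eq_sum_G_monomials[OF assms(1,2)] Tz_eq_top_index_part Var_products_eq_single
proof (rule top_index_part_sum_single)
  show "y_sq_z (q, l - 2*q) \<in> G_monomials p q r l"
    using assms(5) by (force simp: G_monomials_def)
  show "Z (l - 2*q) \<in> Poly_Mapping.keys (y_sq_z (q, l - 2*q))"
    by (simp add: in_keys_iff)
  fix mon i
  assume "mon \<in> G_monomials p q r l" "Z i \<in> Poly_Mapping.keys mon"
  then show "i \<le> l - 2*q \<and> (i = l - 2*q \<longrightarrow> mon = y_sq_z (q, l - 2*q))"
    using assms(3-5) by (auto simp: G_monomials_def in_keys_iff split: if_splits)
qed (rule finite_G_monomials)

theorem lemma4p4:
  fixes m p q r l :: nat
  assumes char2: "CHAR('a::field) = 2"
    and p: "1 \<le> p" "p \<le> m + 1" and q: "1 \<le> q" "q \<le> m + 1" and r: "1 \<le> r" "r \<le> m + 1"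
    and l: "l \<le> m"
  shows "((Gc m p q r l :: 'a mpoly) =
           (\<Sum>u\<in>{u. p \<le> u \<and> 2*u = l}. Var (X u)^2)
         + (\<Sum>(v,w)\<in>{(v,w). q \<le> v \<and> r \<le> w \<and> 2*v + w = l}. Var (Y v)^2 * Var (Z w))
         + (\<Sum>(v,w)\<in>{(v,w). q \<le> v \<and> r \<le> w \<and> v + 2*w = l}. Var (Y v) * Var (Z w)^2)
         + (\<Sum>(u,v,w)\<in>{(u,v,w). p \<le> u \<and> q \<le> v \<and> r \<le> w \<and> u + v + w = l}.
               Var (X u) * Var (Y v) * Var (Z w)))
    \<and> (l < 2*p \<and> l < 2*q + r \<and> l < q + 2*r \<longrightarrow> (Gc m p q r l :: 'a mpoly) = 0)
    \<and> (l = 2*p \<and> l < 2*q + r \<and> l < q + 2*r \<longrightarrow> (Gc m p q r l :: 'a mpoly) = Var (X p)^2)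
    \<and> (p > q \<and> q = r \<and> l = 2*p \<and> 2*p = 3*q \<longrightarrow>
           (Gc m p q r l :: 'a mpoly) = Var (X p)^2 + Var (Y q)^2 * Var (Z q) + Var (Y q) * Var (Z q)^2)
    \<and> (p \<ge> q \<and> q > r \<and> l \<ge> 2*p \<and> 2*p = q + 2*r \<longrightarrow>
           Ty (Gc m p q r l :: 'a mpoly) = Var (Y (l - 2*r)) * Var (Z r)^2)
    \<and> (p \<ge> r \<and> r > q \<and> l \<ge> 2*p \<and> 2*p = 2*q + r \<longrightarrow>
           Tz (Gc m p q r l :: 'a mpoly) = Var (Y q)^2 * Var (Z (l - 2*q)))
    \<and> (p > q \<and> q = r \<and> l > 3*q \<longrightarrow>
           Ty (Gc m p q r l :: 'a mpoly) = Var (Y (l - 2*q)) * Var (Z q)^2)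
    \<and> (p > q \<and> q = r \<and> l > 3*q \<longrightarrow>
           Tz (Gc m p q r l :: 'a mpoly) = Var (Y q)^2 * Var (Z (l - 2*q)))"
  by (rule conjI[OF Gc_eq_sums[OF char2 l]])
    (use Gc_eq_0[OF char2 l] Gc_eq_Var_X_sq[OF char2 l] Gc_eq_at_2p_eq_3q[OF char2 l]
       Ty_Gc[OF char2 l] Tz_Gc[OF char2 l] in auto)

end
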